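(* Let $n\ge 5$, $k\ge 1$, and $0\le h\le n$. Let $\mathcal{G}^4_{n,h}$ be a graph obtained from $\mathcal{G}^4_n$ by deleting any $h$ of the $n$ links of the form $\{i,i+2 \pmod n\}$. Then $$\lceil h/2\rceil \;\le\; M^{\mathcal{G}^4_{n,h}}_{k,n}\;\le\; 2M^C_{k,\lceil n/2\rceil}+h+2 .$$
   Context: $\mathcal{G}^4_n$ is the graph on $\{1,\dots,n\}$ in which each node $i$ is adjacent to $i\pm1$ and $i\pm2\pmod n$. For a graph $G$ on $\{1,\dots,n\}$, a measurement matrix for $G$ is a matrix $A\in\{0,1\}^{m\times n}$ in which every nonzero row has a support that induces a connected subgraph of $G$. A vector is $k$-sparse if it has at most $k$ nonzero entries. $A$ identifies all $k$-sparse vectors if $Ax_1\ne Ax_2$ for every two distinct $k$-sparse $x_1,x_2\in\mathbb{R}^n$. $M^G_{k,n}$ is the minimum number of rows of a measurement matrix for $G$ that identifies all $k$-sparse vectors. $M^C_{k,N}$ is the minimum number of rows of an arbitrary $0$-$1$ matrix with $N$ columns that identifies all $k$-sparse vectors in $\mathbb{R}^N$. *)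

theory Defs
  imports Complex_Main
begin

text \<open>Graphs on the vertex set {1..n} are given by their edge sets (sets of 2-element sets).
 Vertex i+1 mod n (in the labelling 1..n) is (i mod n)+1, vertex i+2 mod n is ((i+1) mod n)+1.\<close>

definition skip2_links :: "nat \<Rightarrow> nat set set" where
  "skip2_links n = {{i, ((i + 1) mod n) + 1} | i. i \<in> {1..n}}"

definition G4 :: "nat \<Rightarrow> nat set set" where
  "G4 n = {{i, (i mod n) + 1} | i. i \<in> {1..n}} \<union> skip2_links n"

definition induces_connected :: "nat set set \<Rightarrow> nat set \<Rightarrow> bool" where
  "induces_connected Es S \<longleftrightarrow> S \<noteq> {} \<and>
     (\<forall>u\<in>S. \<forall>v\<in>S. (u, v) \<in> ({(a, b). a \<in> S \<and> b \<in> S \<and> {a, b} \<in> Es})\<^sup>*)"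

text \<open>A matrix with m rows (indexed 0..<m) and n columns (indexed 1..n); entries outside are irrelevant.\<close>
definition zero_one_matrix :: "nat \<Rightarrow> nat \<Rightarrow> (nat \<Rightarrow> nat \<Rightarrow> real) \<Rightarrow> bool" where
  "zero_one_matrix m n A \<longleftrightarrow> (\<forall>r<m. \<forall>j\<in>{1..n}. A r j \<in> {0, 1})"

definition row_support :: "nat \<Rightarrow> (nat \<Rightarrow> nat \<Rightarrow> real) \<Rightarrow> nat \<Rightarrow> nat set" where
  "row_support n A r = {j \<in> {1..n}. A r j \<noteq> 0}"

definition measurement_matrix :: "nat set set \<Rightarrow> nat \<Rightarrow> nat \<Rightarrow> (nat \<Rightarrow> nat \<Rightarrow> real) \<Rightarrow> bool" where
  "measurement_matrix Es m n A \<longleftrightarrow> zero_one_matrix m n A \<and>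
     (\<forall>r<m. row_support n A r \<noteq> {} \<longrightarrow> induces_connected Es (row_support n A r))"

text \<open>Vectors in R^n: functions nat => real vanishing outside {1..n}.\<close>
definition is_vec :: "nat \<Rightarrow> (nat \<Rightarrow> real) \<Rightarrow> bool" where
  "is_vec n x \<longleftrightarrow> (\<forall>j. j \<notin> {1..n} \<longrightarrow> x j = 0)"

definition sparse :: "nat \<Rightarrow> nat \<Rightarrow> (nat \<Rightarrow> real) \<Rightarrow> bool" where
  "sparse n k x \<longleftrightarrow> card {j \<in> {1..n}. x j \<noteq> 0} \<le> k"

definition mat_vec :: "nat \<Rightarrow> (nat \<Rightarrow> nat \<Rightarrow> real) \<Rightarrow> (nat \<Rightarrow> real) \<Rightarrow> nat \<Rightarrow> real" where
  "mat_vec n A x r = (\<Sum>j = 1..n. A r j * x j)"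

definition identifies :: "nat \<Rightarrow> nat \<Rightarrow> nat \<Rightarrow> (nat \<Rightarrow> nat \<Rightarrow> real) \<Rightarrow> bool" where
  "identifies m n k A \<longleftrightarrow>
     (\<forall>x1 x2. is_vec n x1 \<and> is_vec n x2 \<and> sparse n k x1 \<and> sparse n k x2 \<and> x1 \<noteq> x2 \<longrightarrow>
        (\<exists>r<m. mat_vec n A x1 r \<noteq> mat_vec n A x2 r))"

definition M_graph :: "nat set set \<Rightarrow> nat \<Rightarrow> nat \<Rightarrow> nat" where
  "M_graph Es k n = (LEAST m. \<exists>A. measurement_matrix Es m n A \<and> identifies m n k A)"

definition M_C :: "nat \<Rightarrow> nat \<Rightarrow> nat" where
  "M_C k N = (LEAST m. \<exists>A. zero_one_matrix m N A \<and> identifies m N k A)"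

end

theory Submission
  imports Defs
begin

(* A skip link {c-1, c+1} is indexed by its centre c.  Lower bound: let c_0 < ... < c_{h-1} be the
   centres of the deleted links.  If c1 < c2 are such centres outside a connected row support S,
   then every path of G leaving the open interval (c1,c2) passes through c1 or c2, so S lies
   entirely inside or entirely outside (c1,c2).  Hence, going once around the cyclic sequence of
   centres, S changes membership at most twice.  Identification forces every two cyclically
   consecutive centres to be separated by some row, so h <= 2m.

   Upper bound: with B the midpoints of deleted non-wrapping links, each parity class of vertices
   together with B is connected, and stays connected after adding any further vertices.  We take
   rows  class_p u B  and  (T u class_p u B)  where T runs over the rows of an optimal unrestricted
   N-column matrix transplanted onto the opposite parity class (N = ceil(n/2)), plus the singletons
   of B.  Measurements of these 2 M^C + 2 + |B| rows determine x on B, then the sums of x over all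
   transplanted rows, hence x on both parity classes. *)

definition prv :: "nat \<Rightarrow> nat \<Rightarrow> nat" where
  "prv n c = (if c = 1 then n else c - 1)"

definition nxt :: "nat \<Rightarrow> nat \<Rightarrow> nat" where
  "nxt n c = (if c = n then 1 else c + 1)"

definition link :: "nat \<Rightarrow> nat \<Rightarrow> nat set" where
  "link n c = {prv n c, nxt n c}"

lemma skip2_links_eq_links:
  assumes "n \<ge> 3"
  shows "skip2_links n = link n ` {1..n}"
proof -
  have "{i, (i + 1) mod n + 1} = link n (i mod n + 1) \<and> i mod n + 1 \<in> {1..n}"
    if "i \<in> {1..n}" for i
    using that assms by (cases "i = n") (auto simp: link_def prv_def nxt_def mod_Suc)
  moreover have "link n c = {prv n c, (prv n c + 1) mod n + 1} \<and> prv n c \<in> {1..n}"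
    if "c \<in> {1..n}" for c
    using that assms by (cases "c = 1") (auto simp: link_def prv_def nxt_def mod_Suc)
  ultimately show ?thesis
    unfolding skip2_links_def image_def by blast
qed

lemma finite_skip2_links: "finite (skip2_links n)"
  unfolding skip2_links_def by (simp add: setcompr_eq_image)

lemma inj_on_link:
  assumes "n \<ge> 5"
  shows "inj_on (link n) {1..n}"
  using assms by (auto simp: inj_on_def link_def prv_def nxt_def doubleton_eq_iff split: if_splits)

lemma G4_eq:
  assumes "n \<ge> 3"
  shows "G4 n = (\<lambda>i. {i, nxt n i}) ` {1..n} \<union> link n ` {1..n}"
proof -
  have "{{i, i mod n + 1} | i. i \<in> {1..n}} = (\<lambda>i. {i, nxt n i}) ` {1..n}"
    by (force simp: nxt_def)
  then show ?thesis unfolding G4_def skip2_links_eq_links[OF assms] by simp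
qed

(* Non-wrapping cycle edges are never skip links, so deleting skip links keeps them. *)
lemma cycle_edge_kept:
  assumes "n \<ge> 5" "F \<subseteq> skip2_links n" "1 \<le> i" "i < n"
  shows "{i, i + 1} \<in> G4 n - F"
proof
  have "i mod n + 1 = i + 1" using assms by simp
  then show "{i, i + 1} \<in> G4 n" unfolding G4_def using assms by force
  have "{i, i + 1} \<noteq> link n c" if "c \<in> {1..n}" for c
    using that assms(1) by (auto simp: link_def prv_def nxt_def doubleton_eq_iff split: if_splits)
  moreover have "F \<subseteq> link n ` {1..n}" using assms(1,2) skip2_links_eq_links[of n] by simp
  ultimately show "{i, i + 1} \<notin> F" by blast
qed

lemma skip_edge:
  assumes "1 \<le> i" "i + 2 \<le> n"
  shows "{i, i + 2} \<in> G4 n"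
proof -
  have "(i + 1) mod n + 1 = i + 2" using assms by simp
  then have "{i, i + 2} \<in> skip2_links n" unfolding skip2_links_def using assms by force
  then show ?thesis unfolding G4_def by simp
qed

definition induced_edges :: "nat set set \<Rightarrow> nat set \<Rightarrow> (nat \<times> nat) set" where
  "induced_edges Es S = {(a, b). a \<in> S \<and> b \<in> S \<and> {a, b} \<in> Es}"

lemma induces_connected_iff:
  "induces_connected Es S \<longleftrightarrow> S \<noteq> {} \<and> (\<forall>u\<in>S. \<forall>v\<in>S. (u, v) \<in> (induced_edges Es S)\<^sup>*)"
  unfolding induces_connected_def induced_edges_def by simp

lemma induces_connected_if_root:
  assumes "p \<in> S" "\<And>v. v \<in> S \<Longrightarrow> (p, v) \<in> (induced_edges Es S)\<^sup>*"
  shows "induces_connected Es S"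
proof -
  have "sym (induced_edges Es S)"
    unfolding induced_edges_def sym_def by (auto simp: insert_commute)
  then have "(u, p) \<in> (induced_edges Es S)\<^sup>*" if "u \<in> S" for u
    using assms(2)[OF that] by (meson sym_rtrancl symD)
  then show ?thesis using assms by (auto simp: induces_connected_iff intro: rtrancl_trans)
qed

lemma induced_edge_reach:
  assumes "a \<in> S" "b \<in> S" "{a, b} \<in> Es"
  shows "(a, b) \<in> (induced_edges Es S)\<^sup>*" "(b, a) \<in> (induced_edges Es S)\<^sup>*"
  using assms by (auto simp: induced_edges_def insert_commute)

(* An edge of G4_n minus F that starts strictly between two centres of deleted links and avoids
   both centres ends strictly between them: the only edges jumping over a centre are its own link. *)
lemma edge_stays_between:
  assumes "n \<ge> 5" "1 \<le> c1" "c2 \<le> n" "link n c1 \<in> F" "link n c2 \<in> F"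
    and "{a, b} \<in> G4 n - F" "b \<in> {1..n}" "c1 < a" "a < c2" "b \<noteq> c1" "b \<noteq> c2"
  shows "c1 < b \<and> b < c2"
proof -
  have edge: "{a, b} \<in> (\<lambda>i. {i, nxt n i}) ` {1..n} \<union> link n ` {1..n}"
    using assms(1,6) G4_eq[of n] by simp
  consider (cycle) i where "i \<in> {1..n}" "{a, b} = {i, nxt n i}"
    | (skip) c where "c \<in> {1..n}" "{a, b} = link n c" "c \<noteq> c1" "c \<noteq> c2"
  proof (use edge in \<open>elim UnE imageE\<close>)
    fix c assume c: "c \<in> {1..n}" "{a, b} = link n c"
    then have "c \<noteq> c1" "c \<noteq> c2" using assms(4-6) by auto
    with c show thesis using skip by blast
  qed (use cycle in blast)
  then show ?thesis
  proof cases
    case cycle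
    have "a \<noteq> 1" "a \<noteq> n" using assms(2,3,8,9) by auto
    then have "b = a + 1 \<or> b + 1 = a"
      using cycle by (auto simp: nxt_def doubleton_eq_iff split: if_splits)
    then show ?thesis using assms(8-11) by auto
  next
    case skip
    then have a_in: "a = prv n c \<or> a = nxt n c" and b_other: "b = prv n c \<or> b = nxt n c"
      and "a \<noteq> b"
      using skip(1,2) assms(1)
      by (auto simp: link_def prv_def nxt_def doubleton_eq_iff split: if_splits)
    show ?thesis
    proof (cases "a = prv n c")
      case True
      then have "c \<noteq> 1" using assms(3,9) by (auto simp: prv_def)
      then have "c = a + 1" using True skip(1) by (auto simp: prv_def)
      then have "c < c2" "c \<noteq> n" using assms(3,9) skip(4) by auto
      then have "b = c + 1" using b_other True \<open>a \<noteq> b\<close> by (auto simp: nxt_def)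
      then show ?thesis using assms(8,11) \<open>c = a + 1\<close> \<open>c < c2\<close> by auto
    next
      case False
      then have a_nxt: "a = nxt n c" using a_in by simp
      then have "c \<noteq> n" using assms(2,8) by (auto simp: nxt_def)
      then have "a = c + 1" using a_nxt by (simp add: nxt_def)
      then have "c1 < c" "c \<noteq> 1" using assms(2,8) skip(3) by auto
      then have "b = c - 1" using b_other a_nxt \<open>a \<noteq> b\<close> by (auto simp: prv_def)
      then show ?thesis using assms(9,10) \<open>a = c + 1\<close> \<open>c1 < c\<close> by auto
    qed
  qed
qed

lemma row_stays_between:
  assumes "n \<ge> 5" "1 \<le> c1" "c2 \<le> n" "link n c1 \<in> F" "link n c2 \<in> F"
    and "S \<subseteq> {1..n}" "c1 \<notin> S" "c2 \<notin> S" "induces_connected (G4 n - F) S"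
    and "u \<in> S" "v \<in> S" "c1 < u" "u < c2"
  shows "c1 < v \<and> v < c2"
proof -
  have "(u, v) \<in> (induced_edges (G4 n - F) S)\<^sup>*"
    using assms(9-11) by (simp add: induces_connected_iff)
  then show ?thesis
  proof (induction rule: rtrancl_induct)
    case (step b c)
    then have "{b, c} \<in> G4 n - F" "c \<in> S" by (auto simp: induced_edges_def)
    then show ?case
      using edge_stays_between[OF assms(1-5)] step.IH assms(6-8) by blast
  qed (use assms in simp)
qed

lemma card_le_one_if_no_pair:
  fixes X :: "'a::linorder set"
  assumes "\<And>a b. a \<in> X \<Longrightarrow> b \<in> X \<Longrightarrow> a < b \<Longrightarrow> False"
  shows "card X \<le> 1"
proof -
  have "\<forall>a\<in>X. \<forall>b\<in>X. a = b" using assms by (metis linorder_neqE)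
  then show ?thesis by (cases "finite X") (simp_all add: card_le_Suc0_iff_eq)
qed

definition cyclic_cuts :: "nat \<Rightarrow> (nat \<Rightarrow> nat) \<Rightarrow> nat set \<Rightarrow> nat set" where
  "cyclic_cuts h d S = {s. s < h \<and> (d s \<in> S) \<noteq> (d (Suc s mod h) \<in> S)}"

(* For strictly increasing d and a set S that lies inside or outside every interval between two
   sequence elements it avoids, membership in S changes at most twice around the cycle: at most
   once from inside to outside and at most once back. *)
context
  fixes h :: nat and d :: "nat \<Rightarrow> nat" and S :: "nat set"
  assumes mono: "\<And>i j. i < j \<Longrightarrow> j < h \<Longrightarrow> d i < d j"
    and nested: "\<And>c1 c2 u v. c1 \<in> d ` {..<h} \<Longrightarrow> c2 \<in> d ` {..<h} \<Longrightarrow> c1 \<notin> S \<Longrightarrow> c2 \<notin> S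
        \<Longrightarrow> u \<in> S \<Longrightarrow> v \<in> S \<Longrightarrow> c1 < u \<Longrightarrow> u < c2 \<Longrightarrow> c1 < v \<and> v < c2"
begin

lemma mono_less_if_differ:
  assumes "i \<le> j" "j < h" "(d i \<in> S) \<noteq> (d j \<in> S)"
  shows "d i < d j"
  using assms mono[of i j] by (cases "i = j") auto

(* Two exits s < s' are impossible: d s' would lie inside and d s outside the interval between
   the avoided elements d (s+1) and d (s'+1), or between d 0 and d (s+1) when s' is last. *)
lemma at_most_one_exit: "card {s. s < h \<and> d s \<in> S \<and> d (Suc s mod h) \<notin> S} \<le> 1"
proof (rule card_le_one_if_no_pair)
  fix s s' assume s: "s \<in> {s. s < h \<and> d s \<in> S \<and> d (Suc s mod h) \<notin> S}"
    and s': "s' \<in> {s. s < h \<and> d s \<in> S \<and> d (Suc s mod h) \<notin> S}" and "s < s'"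
  then have "Suc s < h" "d s \<in> S" "d (Suc s) \<notin> S" "d s' \<in> S" by auto
  have "d s < d (Suc s)" "d (Suc s) < d s'"
    using mono \<open>Suc s < h\<close> mono_less_if_differ[of "Suc s" s'] \<open>s < s'\<close> s' \<open>d (Suc s) \<notin> S\<close>
    by auto
  show False
  proof (cases "Suc s' < h")
    case True
    then have "d s' < d (Suc s')" "d (Suc s') \<notin> S" using mono s' by auto
    then show False
      using nested[of "d (Suc s)" "d (Suc s')" "d s'" "d s"] True \<open>Suc s < h\<close>
        \<open>d s < d (Suc s)\<close> \<open>d (Suc s) < d s'\<close> \<open>d s \<in> S\<close> \<open>d (Suc s) \<notin> S\<close> \<open>d s' \<in> S\<close>
      by auto
  next
    case False
    then have "Suc s' = h" using s' by simp
    then have "d 0 \<notin> S" using s' by simp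
    then have "d 0 < d s" using mono_less_if_differ[of 0 s] s \<open>d s \<in> S\<close> by auto
    moreover have "d 0 \<in> d ` {..<h}" "d (Suc s) \<in> d ` {..<h}" using \<open>Suc s < h\<close> by auto
    ultimately show False
      using nested[of "d 0" "d (Suc s)" "d s" "d s'"] \<open>d 0 \<notin> S\<close>
        \<open>d s < d (Suc s)\<close> \<open>d (Suc s) < d s'\<close> \<open>d s \<in> S\<close> \<open>d (Suc s) \<notin> S\<close> \<open>d s' \<in> S\<close>
      by auto
  qed
qed

(* Symmetrically for entries, using the avoided elements d s and d s'. *)
lemma at_most_one_entry: "card {s. s < h \<and> d s \<notin> S \<and> d (Suc s mod h) \<in> S} \<le> 1"
proof (rule card_le_one_if_no_pair)
  fix s s' assume s: "s \<in> {s. s < h \<and> d s \<notin> S \<and> d (Suc s mod h) \<in> S}"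
    and s': "s' \<in> {s. s < h \<and> d s \<notin> S \<and> d (Suc s mod h) \<in> S}" and "s < s'"
  then have "Suc s < h" "d s \<notin> S" "d (Suc s) \<in> S" "d s' \<notin> S" by auto
  have "d s < d (Suc s)" "d (Suc s) < d s'"
    using mono \<open>Suc s < h\<close> mono_less_if_differ[of "Suc s" s'] \<open>s < s'\<close> s' \<open>d (Suc s) \<in> S\<close>
    by auto
  have range: "d s \<in> d ` {..<h}" "d s' \<in> d ` {..<h}" using s s' by auto
  show False
  proof (cases "Suc s' < h")
    case True
    then have "d s' < d (Suc s')" "d (Suc s') \<in> S" using mono s' by auto
    then show False
      using nested[of "d s" "d s'" "d (Suc s)" "d (Suc s')"] range
        \<open>d s < d (Suc s)\<close> \<open>d (Suc s) < d s'\<close> \<open>d s \<notin> S\<close> \<open>d (Suc s) \<in> S\<close> \<open>d s' \<notin> S\<close>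
      by auto
  next
    case False
    then have "Suc s' = h" using s' by simp
    then have "d 0 \<in> S" using s' by simp
    then have "d 0 < d s" using mono_less_if_differ[of 0 s] s \<open>d s \<notin> S\<close> by auto
    then show False
      using nested[of "d s" "d s'" "d (Suc s)" "d 0"] range \<open>d 0 \<in> S\<close>
        \<open>d s < d (Suc s)\<close> \<open>d (Suc s) < d s'\<close> \<open>d s \<notin> S\<close> \<open>d (Suc s) \<in> S\<close> \<open>d s' \<notin> S\<close>
      by auto
  qed
qed

lemma card_cyclic_cuts: "card (cyclic_cuts h d S) \<le> 2"
proof -
  have "cyclic_cuts h d S = {s. s < h \<and> d s \<in> S \<and> d (Suc s mod h) \<notin> S}
      \<union> {s. s < h \<and> d s \<notin> S \<and> d (Suc s mod h) \<in> S}"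
    by (auto simp: cyclic_cuts_def)
  then have "card (cyclic_cuts h d S) \<le> card {s. s < h \<and> d s \<in> S \<and> d (Suc s mod h) \<notin> S}
      + card {s. s < h \<and> d s \<notin> S \<and> d (Suc s mod h) \<in> S}"
    by (simp add: card_Un_le)
  then show ?thesis using at_most_one_exit at_most_one_entry by linarith
qed

end

definition unit_vec :: "nat \<Rightarrow> nat \<Rightarrow> real" where
  "unit_vec a j = (if j = a then 1 else 0)"

lemma unit_vec_props:
  assumes "a \<in> {1..n}" "k \<ge> 1"
  shows "is_vec n (unit_vec a)" "sparse n k (unit_vec a)" "mat_vec n A (unit_vec a) r = A r a"
proof -
  have "{j \<in> {1..n}. unit_vec a j \<noteq> 0} = {a}" using assms(1) by (auto simp: unit_vec_def)
  then show "sparse n k (unit_vec a)" using assms(2) by (simp add: sparse_def)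
  show "is_vec n (unit_vec a)" using assms(1) by (auto simp: is_vec_def unit_vec_def)
  show "mat_vec n A (unit_vec a) r = A r a"
    using assms(1) by (simp add: mat_vec_def unit_vec_def if_distrib cong: if_cong)
qed

lemma identifies_distinct_columns:
  assumes "identifies m n k A" "k \<ge> 1" "a \<in> {1..n}" "b \<in> {1..n}" "a \<noteq> b"
  shows "\<exists>r<m. A r a \<noteq> A r b"
proof -
  have "unit_vec a \<noteq> unit_vec b" using assms(5) by (auto simp: unit_vec_def fun_eq_iff)
  then obtain r where "r < m" "mat_vec n A (unit_vec a) r \<noteq> mat_vec n A (unit_vec b) r"
    using assms unit_vec_props unfolding identifies_def by metis
  then show ?thesis using unit_vec_props(3) assms(2-4) by metis
qed

lemma double_counting_le:
  assumes "\<And>s. s < h \<Longrightarrow> \<exists>r<m. s \<in> C r" and "\<And>r. r < m \<Longrightarrow> finite (C r) \<and> card (C r) \<le> c"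
  shows "h \<le> c * m"
proof -
  have "h = card {..<h}" by simp
  also have "\<dots> \<le> card (\<Union>r<m. C r)"
    using assms by (intro card_mono) (auto simp: subset_eq)
  also have "\<dots> \<le> (\<Sum>r<m. card (C r))" by (rule card_UN_le) simp
  also have "\<dots> \<le> (\<Sum>r<m. c)" using assms(2) by (intro sum_mono) simp
  finally show ?thesis by (simp add: mult.commute)
qed

lemma strictly_increasing_enumeration:
  fixes D :: "'a::linorder set"
  assumes "finite D" "card D = h"
  obtains d where "\<And>i j. i < j \<Longrightarrow> j < h \<Longrightarrow> d i < d j" "\<And>s. s < h \<Longrightarrow> d s \<in> D"
proof
  let ?ds = "sorted_list_of_set D"
  show "?ds ! i < ?ds ! j" if "i < j" "j < h" for i j
    using that assms sorted_wrt_nth_less[OF strict_sorted_list_of_set[of D]] by simp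
  show "?ds ! s \<in> D" if "s < h" for s
    using that assms by (metis length_sorted_list_of_set nth_mem set_sorted_list_of_set)
qed

lemma cuts_per_row:
  assumes "n \<ge> 5" and mono: "\<And>i j. i < j \<Longrightarrow> j < h \<Longrightarrow> d i < d j"
    and removed: "\<And>s. s < h \<Longrightarrow> d s \<in> {1..n} \<and> link n (d s) \<in> F"
    and "measurement_matrix (G4 n - F) m n A" "r < m"
  shows "card (cyclic_cuts h d (row_support n A r)) \<le> 2"
proof (cases "row_support n A r = {}")
  case True
  then show ?thesis by (simp add: cyclic_cuts_def)
next
  case False
  let ?S = "row_support n A r"
  have conn: "induces_connected (G4 n - F) ?S"
    using assms(4,5) False by (auto simp: measurement_matrix_def)
  have sub: "?S \<subseteq> {1..n}" by (auto simp: row_support_def)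
  show ?thesis
  proof (rule card_cyclic_cuts[OF mono])
    fix c1 c2 u v
    assume "c1 \<in> d ` {..<h}" "c2 \<in> d ` {..<h}" "c1 \<notin> ?S" "c2 \<notin> ?S"
      "u \<in> ?S" "v \<in> ?S" "c1 < u" "u < c2"
    moreover have "1 \<le> c1" "c2 \<le> n" "link n c1 \<in> F" "link n c2 \<in> F"
      using calculation(1,2) removed by auto
    ultimately show "c1 < v \<and> v < c2"
      using row_stays_between[OF assms(1) _ _ _ _ sub _ _ conn] by blast
  qed
qed

lemma every_cut_measured:
  assumes "identifies m n k A" "k \<ge> 1" "zero_one_matrix m n A"
    and "\<And>s. s < h \<Longrightarrow> d s \<in> {1..n}" and "s < h" "d s \<noteq> d (Suc s mod h)"
  shows "\<exists>r<m. s \<in> cyclic_cuts h d (row_support n A r)"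
proof -
  have cols: "d s \<in> {1..n}" "d (Suc s mod h) \<in> {1..n}" using assms(4,5) by auto
  then obtain r where r: "r < m" "A r (d s) \<noteq> A r (d (Suc s mod h))"
    using identifies_distinct_columns[OF assms(1,2)] assms(6) by blast
  then have "A r (d s) \<in> {0, 1}" "A r (d (Suc s mod h)) \<in> {0, 1}"
    using assms(3) cols by (auto simp: zero_one_matrix_def)
  then have "(d s \<in> row_support n A r) \<noteq> (d (Suc s mod h) \<in> row_support n A r)"
    using r(2) cols by (auto simp: row_support_def)
  then show ?thesis using r(1) assms(5) by (auto simp: cyclic_cuts_def)
qed

lemma removed_links_lower_bound:
  assumes "n \<ge> 5" "k \<ge> 1" "F \<subseteq> skip2_links n" "card F = h"
    and "measurement_matrix (G4 n - F) m n A" "identifies m n k A"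
  shows "h \<le> 2 * m"
proof -
  define D where "D = {c \<in> {1..n}. link n c \<in> F}"
  have "F = link n ` D"
    using skip2_links_eq_links[of n] assms(1,3) by (auto simp: D_def)
  moreover have "inj_on (link n) D"
    using inj_on_link[OF assms(1)] by (rule inj_on_subset) (auto simp: D_def)
  ultimately have card_D: "card D = h" using assms(4) card_image by metis
  consider "h = 0" | "h = 1" | "h \<ge> 2" by linarith
  then show ?thesis
  proof cases
    case 2
    then show ?thesis
      using identifies_distinct_columns[OF assms(6,2), of 1 2] assms(1) by auto
  next
    case 3
    obtain d where mono: "\<And>i j. i < j \<Longrightarrow> j < h \<Longrightarrow> d i < d j"
      and in_D: "\<And>s. s < h \<Longrightarrow> d s \<in> D"
      using strictly_increasing_enumeration[of D h] card_D by (auto simp: D_def)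
    have next_differs: "d s \<noteq> d (Suc s mod h)" if "s < h" for s
    proof (cases "Suc s < h")
      case False
      then have "Suc s = h" using that by simp
      then have "Suc s mod h = 0" "0 < s" using 3 by auto
      then show ?thesis using mono[of 0 s] that by auto
    qed (use mono[of s "Suc s"] in auto)
    have removed: "d s \<in> {1..n} \<and> link n (d s) \<in> F" if "s < h" for s
      using in_D[OF that] by (simp add: D_def)
    show ?thesis
    proof (rule double_counting_le)
      show "\<exists>r<m. s \<in> cyclic_cuts h d (row_support n A r)" if "s < h" for s
        using every_cut_measured[OF assms(6,2) _ _ that next_differs[OF that]] assms(5) removed
        by (auto simp: measurement_matrix_def)
      show "finite (cyclic_cuts h d (row_support n A r))
          \<and> card (cyclic_cuts h d (row_support n A r)) \<le> 2" if "r < m" for r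
        using cuts_per_row[OF assms(1) mono removed assms(5) that]
        by (simp add: cyclic_cuts_def)
    qed
  qed simp
qed

definition set_matrix :: "nat set list \<Rightarrow> nat \<Rightarrow> nat \<Rightarrow> real" where
  "set_matrix rows r j = (if j \<in> rows ! r then 1 else 0)"

lemma mat_vec_set_matrix:
  assumes "rows ! r \<subseteq> {1..n}"
  shows "mat_vec n (set_matrix rows) x r = sum x (rows ! r)"
proof -
  have "mat_vec n (set_matrix rows) x r = (\<Sum>j\<in>{1..n}. if j \<in> rows ! r then x j else 0)"
    unfolding mat_vec_def set_matrix_def by (rule sum.cong) auto
  also have "\<dots> = sum x ({1..n} \<inter> rows ! r)" by (simp add: sum.inter_restrict)
  finally show ?thesis using assms by (simp add: Int_absorb1)
qed

lemma set_matrix_measurement: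
  assumes "\<And>S. S \<in> set rows \<Longrightarrow> S \<subseteq> {1..n} \<and> induces_connected Es S"
  shows "measurement_matrix Es (length rows) n (set_matrix rows)"
proof -
  have "row_support n (set_matrix rows) r = rows ! r" if "r < length rows" for r
    using assms[OF nth_mem[OF that]] by (auto simp: row_support_def set_matrix_def)
  then show ?thesis
    using assms nth_mem
    by (auto simp: measurement_matrix_def zero_one_matrix_def set_matrix_def)
qed

lemma set_matrix_identifies:
  assumes "\<And>S. S \<in> set rows \<Longrightarrow> S \<subseteq> {1..n}"
    and "\<And>x1 x2. is_vec n x1 \<Longrightarrow> is_vec n x2 \<Longrightarrow> sparse n k x1 \<Longrightarrow> sparse n k x2
      \<Longrightarrow> (\<And>S. S \<in> set rows \<Longrightarrow> sum x1 S = sum x2 S) \<Longrightarrow> x1 = x2"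
  shows "identifies (length rows) n k (set_matrix rows)"
  unfolding identifies_def
proof (intro allI impI)
  fix x1 x2 :: "nat \<Rightarrow> real"
  assume x: "is_vec n x1 \<and> is_vec n x2 \<and> sparse n k x1 \<and> sparse n k x2 \<and> x1 \<noteq> x2"
  have "\<exists>S\<in>set rows. sum x1 S \<noteq> sum x2 S" using assms(2) x by blast
  then obtain r where "r < length rows" "sum x1 (rows ! r) \<noteq> sum x2 (rows ! r)"
    by (auto simp: in_set_conv_nth)
  then show "\<exists>r<length rows. mat_vec n (set_matrix rows) x1 r \<noteq> mat_vec n (set_matrix rows) x2 r"
    using mat_vec_set_matrix assms(1) nth_mem by metis
qed

lemma sum_eq_from_union:
  fixes x1 x2 :: "'a \<Rightarrow> real"
  assumes "finite T" "finite W" "\<And>j. j \<in> T \<inter> W \<Longrightarrow> x1 j = x2 j"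
    and "sum x1 W = sum x2 W" "sum x1 (T \<union> W) = sum x2 (T \<union> W)"
  shows "sum x1 T = sum x2 T"
proof -
  have "sum x1 (T \<inter> W) = sum x2 (T \<inter> W)" using assms(3) by (rule sum.cong[OF refl])
  then show ?thesis
    using sum.union_inter[OF assms(1,2), of x1] sum.union_inter[OF assms(1,2), of x2] assms(4,5)
    by linarith
qed

definition pulled_row ::
    "nat \<Rightarrow> nat \<Rightarrow> (nat \<Rightarrow> nat) \<Rightarrow> (nat \<Rightarrow> nat \<Rightarrow> real) \<Rightarrow> nat \<Rightarrow> nat set" where
  "pulled_row n N \<phi> AC r = \<phi> ` {c \<in> {1..N}. \<phi> c \<in> {1..n} \<and> AC r c = 1}"

definition pullback :: "nat \<Rightarrow> nat \<Rightarrow> (nat \<Rightarrow> nat) \<Rightarrow> (nat \<Rightarrow> real) \<Rightarrow> nat \<Rightarrow> real" where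
  "pullback n N \<phi> x c = (if c \<in> {1..N} \<and> \<phi> c \<in> {1..n} then x (\<phi> c) else 0)"

lemma mat_vec_pullback:
  assumes "zero_one_matrix mC N AC" "r < mC" "inj_on \<phi> {1..N}"
  shows "mat_vec N AC (pullback n N \<phi> x) r = sum x (pulled_row n N \<phi> AC r)"
proof -
  let ?C = "{c \<in> {1..N}. \<phi> c \<in> {1..n} \<and> AC r c = 1}"
  have "mat_vec N AC (pullback n N \<phi> x) r
      = (\<Sum>c\<in>{1..N}. if \<phi> c \<in> {1..n} \<and> AC r c = 1 then x (\<phi> c) else 0)"
    unfolding mat_vec_def
  proof (rule sum.cong)
    fix c assume "c \<in> {1..N}"
    then have "AC r c \<in> {0, 1}" using assms(1,2) by (auto simp: zero_one_matrix_def)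
    then show "AC r c * pullback n N \<phi> x c
        = (if \<phi> c \<in> {1..n} \<and> AC r c = 1 then x (\<phi> c) else 0)"
      using \<open>c \<in> {1..N}\<close> by (auto simp: pullback_def)
  qed simp
  also have "\<dots> = (\<Sum>c\<in>?C. x (\<phi> c))" by (rule sum.inter_filter[symmetric]) simp
  also have "\<dots> = sum x (pulled_row n N \<phi> AC r)"
  proof -
    have "inj_on \<phi> ?C" using assms(3) by (rule inj_on_subset) auto
    then show ?thesis unfolding pulled_row_def by (simp add: sum.reindex)
  qed
  finally show ?thesis .
qed

lemma sparse_pullback:
  assumes "sparse n k x" "inj_on \<phi> {1..N}"
  shows "sparse N k (pullback n N \<phi> x)"
proof -
  have "card {c \<in> {1..N}. pullback n N \<phi> x c \<noteq> 0} \<le> card {j \<in> {1..n}. x j \<noteq> 0}"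
    by (rule card_inj_on_le[of \<phi>]) (auto simp: pullback_def intro: inj_on_subset[OF assms(2)])
  then show ?thesis using assms(1) by (simp add: sparse_def)
qed

lemma identifies_pullback:
  assumes "zero_one_matrix mC N AC" "identifies mC N k AC" "inj_on \<phi> {1..N}"
    and "sparse n k x1" "sparse n k x2"
    and "\<And>r. r < mC \<Longrightarrow> sum x1 (pulled_row n N \<phi> AC r) = sum x2 (pulled_row n N \<phi> AC r)"
    and "c \<in> {1..N}" "\<phi> c \<in> {1..n}"
  shows "x1 (\<phi> c) = x2 (\<phi> c)"
proof -
  have "pullback n N \<phi> x1 = pullback n N \<phi> x2"
  proof (rule ccontr)
    assume "pullback n N \<phi> x1 \<noteq> pullback n N \<phi> x2"
    moreover have "is_vec N (pullback n N \<phi> x)" for x by (simp add: is_vec_def pullback_def)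
    ultimately obtain r where "r < mC"
      "mat_vec N AC (pullback n N \<phi> x1) r \<noteq> mat_vec N AC (pullback n N \<phi> x2) r"
      using assms(2) sparse_pullback[OF assms(4,3)] sparse_pullback[OF assms(5,3)]
      unfolding identifies_def by blast
    then show False using assms(6) mat_vec_pullback[OF assms(1) _ assms(3)] by metis
  qed
  then show ?thesis using assms(7,8) by (metis pullback_def)
qed

definition parity_class :: "nat \<Rightarrow> nat \<Rightarrow> nat set" where
  "parity_class n p = {v \<in> {1..n}. v mod 2 = p mod 2}"

definition bypass_vertices :: "nat \<Rightarrow> nat set set \<Rightarrow> nat set" where
  "bypass_vertices n F = (\<lambda>i. i + 1) ` {i. 1 \<le> i \<and> i + 2 \<le> n \<and> {i, i + 2} \<in> F}"

lemma bypass_vertices_subset: "bypass_vertices n F \<subseteq> {1..n}"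
  by (auto simp: bypass_vertices_def)

lemma card_bypass_vertices:
  assumes "finite F"
  shows "card (bypass_vertices n F) \<le> card F"
proof -
  let ?I = "{i. 1 \<le> i \<and> i + 2 \<le> n \<and> {i, i + 2} \<in> F}"
  have "card (bypass_vertices n F) \<le> card ?I"
    unfolding bypass_vertices_def by (rule card_image_le, rule finite_subset[of _ "{..n}"]) auto
  also have "\<dots> \<le> card F"
    by (rule card_inj_on_le[of "\<lambda>i. {i, i + 2}"]) (auto simp: inj_on_def doubleton_eq_iff assms)
  finally show ?thesis .
qed

(* Any vertex set between (parity class of p) u B and {1..n} is connected in G4_n minus F:
   consecutive class vertices are joined by their link, or through the midpoint in B when the
   link is deleted, and every other vertex is a cycle neighbour of a class vertex. *)
context
  fixes n p :: nat and F :: "nat set set" and S :: "nat set"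
  assumes n5: "n \<ge> 5" and skips: "F \<subseteq> skip2_links n" and root: "p = 1 \<or> p = 2"
    and covers: "parity_class n p \<union> bypass_vertices n F \<subseteq> S" and within: "S \<subseteq> {1..n}"
begin

lemma reach_next_in_class:
  assumes "1 \<le> i" "i + 2 \<le> n" "i \<in> S" "i + 2 \<in> S"
  shows "(i, i + 2) \<in> (induced_edges (G4 n - F) S)\<^sup>*"
proof (cases "{i, i + 2} \<in> F")
  case False
  then show ?thesis using skip_edge[OF assms(1,2)] induced_edge_reach assms(3,4) by blast
next
  case True
  then have mid: "i + 1 \<in> S" using assms(1,2) covers by (auto simp: bypass_vertices_def)
  have "(i, i + 1) \<in> (induced_edges (G4 n - F) S)\<^sup>*"
    using cycle_edge_kept[OF n5 skips] induced_edge_reach assms mid by simp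
  moreover have "(i + 1, i + 2) \<in> (induced_edges (G4 n - F) S)\<^sup>*"
    using cycle_edge_kept[OF n5 skips, of "i + 1"] induced_edge_reach assms mid by simp
  ultimately show ?thesis by (rule rtrancl_trans)
qed

lemma reach_class_from_root:
  assumes "v \<in> parity_class n p"
  shows "(p, v) \<in> (induced_edges (G4 n - F) S)\<^sup>*"
proof -
  have chain: "(p, p + 2 * t) \<in> (induced_edges (G4 n - F) S)\<^sup>*" if "p + 2 * t \<le> n" for t
    using that
  proof (induction t)
    case (Suc t)
    then have "(p, p + 2 * t) \<in> (induced_edges (G4 n - F) S)\<^sup>*" by simp
    moreover have "p + 2 * t \<in> S" "p + 2 * t + 2 \<in> S"
      using Suc.prems root covers by (auto simp: parity_class_def)
    then have "(p + 2 * t, p + 2 * t + 2) \<in> (induced_edges (G4 n - F) S)\<^sup>*"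
      using reach_next_in_class[of "p + 2 * t"] Suc.prems root by auto
    ultimately have "(p, p + 2 * t + 2) \<in> (induced_edges (G4 n - F) S)\<^sup>*"
      by (rule rtrancl_trans)
    then show ?case by simp
  qed simp
  have "v \<le> n" "v mod 2 = p mod 2" "1 \<le> v" using assms by (auto simp: parity_class_def)
  then have "v = p + 2 * ((v - p) div 2)" using root by presburger
  then show ?thesis using chain[of "(v - p) div 2"] \<open>v \<le> n\<close> by simp
qed

lemma class_with_bypasses_connected: "induces_connected (G4 n - F) S"
proof (rule induces_connected_if_root)
  show "p \<in> S" using root n5 covers by (auto simp: parity_class_def)
  fix v assume "v \<in> S"
  show "(p, v) \<in> (induced_edges (G4 n - F) S)\<^sup>*"
  proof (cases "v \<in> parity_class n p")
    case True
    then show ?thesis by (rule reach_class_from_root)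
  next
    case False
    have "v \<in> {1..n}" using \<open>v \<in> S\<close> within by auto
    then have parity: "v mod 2 \<noteq> p mod 2" using False by (simp add: parity_class_def)
    have "\<exists>w. w \<in> parity_class n p \<and> w \<in> {1..<n} \<and> (v = w + 1 \<or> w = v + 1)"
    proof (cases "v = 1")
      case True
      then have "p = 2" using parity root by auto
      then show ?thesis using True n5 by (intro exI[of _ 2]) (simp add: parity_class_def)
    next
      case False
      then have "2 \<le> v" "v \<le> n" using \<open>v \<in> {1..n}\<close> by auto
      moreover have "(v - 1) mod 2 = p mod 2"
        using parity \<open>2 \<le> v\<close> by (simp add: mod2_eq_if split: if_splits)
      ultimately show ?thesis by (intro exI[of _ "v - 1"]) (simp add: parity_class_def; linarith)
    qed
    then obtain w where w: "w \<in> parity_class n p" "w \<in> {1..<n}" "v = w + 1 \<or> w = v + 1"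
      by blast
    have "{w, v} \<in> G4 n - F"
    proof (cases "v = w + 1")
      case True
      then show ?thesis using w(2) cycle_edge_kept[OF n5 skips, of w] by simp
    next
      case False
      then have "{w, v} = {v, v + 1}" "v < n" using w(2,3) by auto
      then show ?thesis using \<open>v \<in> {1..n}\<close> cycle_edge_kept[OF n5 skips, of v] by simp
    qed
    moreover have "w \<in> S" using w(1) covers by blast
    ultimately have "(w, v) \<in> (induced_edges (G4 n - F) S)\<^sup>*"
      using induced_edge_reach(1) \<open>v \<in> S\<close> by blast
    then show ?thesis using reach_class_from_root[OF w(1)] by (rule rtrancl_trans[rotated])
  qed
qed

end

(* For p in {1,2}, parity_slot p c is the c-th vertex of the parity class not containing p. *)
definition parity_slot :: "nat \<Rightarrow> nat \<Rightarrow> nat" where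
  "parity_slot p c = 2 * c + 1 - p"

lemma inj_on_parity_slot: "p \<le> 2 \<Longrightarrow> inj_on (parity_slot p) {1..N}"
  by (auto simp: inj_on_def parity_slot_def)

lemma pulled_row_avoids_class:
  assumes "p = 1 \<or> p = 2"
  shows "pulled_row n N (parity_slot p) AC r \<inter> parity_class n p = {}"
  using assms by (auto simp: pulled_row_def parity_class_def parity_slot_def)

lemma parity_slot_covers:
  assumes "n \<le> 2 * N" "j \<in> {1..n}"
  shows "\<exists>p c. (p = 1 \<or> p = 2) \<and> c \<in> {1..N} \<and> parity_slot p c = j"
proof -
  let ?p = "if even j then 1 else 2 :: nat" and ?c = "(j + 1) div 2"
  have "parity_slot ?p ?c = j" "?c \<in> {1..N}"
    using assms by (auto simp: parity_slot_def elim!: evenE oddE)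
  then show ?thesis by (intro exI[of _ ?p] exI[of _ ?c]) simp
qed

definition class_rows ::
    "nat \<Rightarrow> nat \<Rightarrow> (nat \<Rightarrow> nat \<Rightarrow> real) \<Rightarrow> nat \<Rightarrow> nat set \<Rightarrow> nat \<Rightarrow> nat set list" where
  "class_rows n N AC mC B p = (parity_class n p \<union> B)
     # map (\<lambda>r. pulled_row n N (parity_slot p) AC r \<union> (parity_class n p \<union> B)) [0..<mC]"

lemma class_rows_bounds:
  assumes "B \<subseteq> {1..n}" "S \<in> set (class_rows n N AC mC B p)"
  shows "parity_class n p \<union> B \<subseteq> S" "S \<subseteq> {1..n}"
  using assms by (auto simp: class_rows_def parity_class_def pulled_row_def)

lemma recover_from_class_rows:
  assumes "zero_one_matrix mC N AC" "identifies mC N k AC" "p = 1 \<or> p = 2"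
    and "B \<subseteq> {1..n}" "sparse n k x1" "sparse n k x2" "\<And>b. b \<in> B \<Longrightarrow> x1 b = x2 b"
    and "\<And>S. S \<in> set (class_rows n N AC mC B p) \<Longrightarrow> sum x1 S = sum x2 S"
    and "c \<in> {1..N}" "parity_slot p c \<in> {1..n}"
  shows "x1 (parity_slot p c) = x2 (parity_slot p c)"
proof (rule identifies_pullback[where \<phi> = "parity_slot p",
      OF assms(1,2) _ assms(5,6) _ assms(9,10)])
  show "inj_on (parity_slot p) {1..N}" using assms(3) by (intro inj_on_parity_slot) auto
  fix r assume "r < mC"
  let ?T = "pulled_row n N (parity_slot p) AC r" and ?W = "parity_class n p \<union> B"
  show "sum x1 ?T = sum x2 ?T"
  proof (rule sum_eq_from_union)
    show "finite ?T" "finite ?W"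
      using assms(4) by (auto simp: pulled_row_def parity_class_def intro: finite_subset)
    show "x1 j = x2 j" if "j \<in> ?T \<inter> ?W" for j
      using that pulled_row_avoids_class[OF assms(3)] assms(7) by blast
    show "sum x1 ?W = sum x2 ?W" "sum x1 (?T \<union> ?W) = sum x2 (?T \<union> ?W)"
      using assms(8) \<open>r < mC\<close> by (auto simp: class_rows_def)
  qed
qed

definition sensing_rows ::
    "nat \<Rightarrow> nat \<Rightarrow> (nat \<Rightarrow> nat \<Rightarrow> real) \<Rightarrow> nat \<Rightarrow> nat set set \<Rightarrow> nat set list" where
  "sensing_rows n N AC mC F =
     class_rows n N AC mC (bypass_vertices n F) 1 @ class_rows n N AC mC (bypass_vertices n F) 2
     @ map (\<lambda>b. {b}) (sorted_list_of_set (bypass_vertices n F))"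

lemma length_sensing_rows:
  "length (sensing_rows n N AC mC F) = 2 * mC + 2 + card (bypass_vertices n F)"
  by (simp add: sensing_rows_def class_rows_def)

lemma set_sensing_rows:
  assumes "S \<in> set (sensing_rows n N AC mC F)"
  obtains p where "p = 1 \<or> p = 2" "S \<in> set (class_rows n N AC mC (bypass_vertices n F) p)"
    | b where "b \<in> bypass_vertices n F" "S = {b}"
proof -
  have "finite (bypass_vertices n F)"
    using bypass_vertices_subset finite_subset by blast
  then show ?thesis using assms that unfolding sensing_rows_def by auto
qed

lemma sensing_rows_measurement:
  assumes "n \<ge> 5" "F \<subseteq> skip2_links n"
  shows "measurement_matrix (G4 n - F) (length (sensing_rows n N AC mC F)) n
           (set_matrix (sensing_rows n N AC mC F))"
proof (rule set_matrix_measurement)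
  fix S assume "S \<in> set (sensing_rows n N AC mC F)"
  then show "S \<subseteq> {1..n} \<and> induces_connected (G4 n - F) S"
  proof (cases rule: set_sensing_rows)
    case (1 p)
    note bounds = class_rows_bounds[OF bypass_vertices_subset 1(2)]
    show ?thesis
      using bounds(2) class_with_bypasses_connected[OF assms 1(1) bounds] by simp
  next
    case (2 b)
    then show ?thesis using bypass_vertices_subset[of n F] by (auto simp: induces_connected_def)
  qed
qed

lemma sensing_rows_identify:
  assumes "zero_one_matrix mC N AC" "identifies mC N k AC" "n \<le> 2 * N"
  shows "identifies (length (sensing_rows n N AC mC F)) n k
           (set_matrix (sensing_rows n N AC mC F))"
proof (rule set_matrix_identifies)
  let ?rows = "sensing_rows n N AC mC F" and ?B = "bypass_vertices n F"
  show "S \<subseteq> {1..n}" if "S \<in> set ?rows" for S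
    using that bypass_vertices_subset class_rows_bounds(2)
    by (cases rule: set_sensing_rows) blast+
  fix x1 x2 :: "nat \<Rightarrow> real"
  assume vec: "is_vec n x1" "is_vec n x2" and sparse: "sparse n k x1" "sparse n k x2"
    and sums: "\<And>S. S \<in> set ?rows \<Longrightarrow> sum x1 S = sum x2 S"
  have finite_B: "finite ?B" using bypass_vertices_subset finite_subset by blast
  have on_B: "x1 b = x2 b" if "b \<in> ?B" for b
    using sums[of "{b}"] that finite_B by (simp add: sensing_rows_def)
  have on_slots: "x1 (parity_slot p c) = x2 (parity_slot p c)"
    if "p = 1 \<or> p = 2" "c \<in> {1..N}" "parity_slot p c \<in> {1..n}" for p c
    using recover_from_class_rows[OF assms(1,2) that(1) bypass_vertices_subset sparse on_B _
        that(2,3)] sums that(1)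
    by (auto simp: sensing_rows_def)
  show "x1 = x2"
  proof
    fix j
    show "x1 j = x2 j"
    proof (cases "j \<in> {1..n}")
      case True
      then show ?thesis using parity_slot_covers[OF assms(3) True] on_slots by metis
    qed (use vec in \<open>simp add: is_vec_def\<close>)
  qed
qed

(* M^G and M^C are attained minima; M^C is finite because the identity matrix identifies. *)
lemma M_graph_le:
  assumes "measurement_matrix Es m n A" "identifies m n k A"
  shows "M_graph Es k n \<le> m"
  unfolding M_graph_def by (rule Least_le) (use assms in blast)

lemma M_graph_attained:
  assumes "measurement_matrix Es m n A" "identifies m n k A"
  obtains A' where "measurement_matrix Es (M_graph Es k n) n A'"
    "identifies (M_graph Es k n) n k A'"
proof -
  have "\<exists>A'. measurement_matrix Es (M_graph Es k n) n A' \<and> identifies (M_graph Es k n) n k A'"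
    unfolding M_graph_def by (rule LeastI_ex) (use assms in blast)
  then show ?thesis using that by blast
qed

definition identity_matrix :: "nat \<Rightarrow> nat \<Rightarrow> real" where
  "identity_matrix r j = (if j = r + 1 then 1 else 0)"

lemma identity_matrix_identifies:
  "zero_one_matrix N N identity_matrix \<and> identifies N N k identity_matrix"
proof
  show "zero_one_matrix N N identity_matrix" by (simp add: zero_one_matrix_def identity_matrix_def)
  have reads: "mat_vec N identity_matrix x (j - 1) = x j" if "j \<in> {1..N}" for x j
  proof -
    have "mat_vec N identity_matrix x (j - 1) = (\<Sum>i\<in>{1..N}. if i = j then x i else 0)"
      unfolding mat_vec_def identity_matrix_def using that by (intro sum.cong) auto
    also have "\<dots> = x j" using that by simp
    finally show ?thesis .
  qed
  show "identifies N N k identity_matrix"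
    unfolding identifies_def
  proof (intro allI impI)
    fix x1 x2 :: "nat \<Rightarrow> real"
    assume x: "is_vec N x1 \<and> is_vec N x2 \<and> sparse N k x1 \<and> sparse N k x2 \<and> x1 \<noteq> x2"
    then obtain j where "x1 j \<noteq> x2 j" by auto
    moreover have "j \<in> {1..N}" using x calculation by (auto simp: is_vec_def)
    ultimately show "\<exists>r<N. mat_vec N identity_matrix x1 r \<noteq> mat_vec N identity_matrix x2 r"
      using reads by (intro exI[of _ "j - 1"]) auto
  qed
qed

lemma M_C_attained:
  obtains AC where "zero_one_matrix (M_C k N) N AC" "identifies (M_C k N) N k AC"
proof -
  have "\<exists>AC. zero_one_matrix (M_C k N) N AC \<and> identifies (M_C k N) N k AC"
    unfolding M_C_def by (rule LeastI_ex) (use identity_matrix_identifies in blast)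
  then show ?thesis using that by blast
qed

lemma le_twice_ceiling_half: "n \<le> 2 * nat \<lceil>real n / 2\<rceil>"
proof -
  have "real n \<le> 2 * real_of_int \<lceil>real n / 2\<rceil>" by linarith
  then show ?thesis by linarith
qed

theorem theorem4:
  fixes n k h :: nat and F :: "nat set set"
  assumes "n \<ge> 5" and "k \<ge> 1" and "h \<le> n"
    and "F \<subseteq> skip2_links n" and "card F = h"
  shows "\<lceil>real h / 2\<rceil> \<le> int (M_graph (G4 n - F) k n)
    \<and> M_graph (G4 n - F) k n \<le> 2 * M_C k (nat \<lceil>real n / 2\<rceil>) + h + 2"
proof
  define N where "N = nat \<lceil>real n / 2\<rceil>"
  obtain AC where AC: "zero_one_matrix (M_C k N) N AC" "identifies (M_C k N) N k AC"
    by (rule M_C_attained)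
  let ?rows = "sensing_rows n N AC (M_C k N) F"
  have upper: "measurement_matrix (G4 n - F) (length ?rows) n (set_matrix ?rows)"
    "identifies (length ?rows) n k (set_matrix ?rows)"
    using sensing_rows_measurement[OF assms(1,4)]
      sensing_rows_identify[OF AC le_twice_ceiling_half[of n, folded N_def]] by blast+
  then obtain A where "measurement_matrix (G4 n - F) (M_graph (G4 n - F) k n) n A"
    "identifies (M_graph (G4 n - F) k n) n k A"
    by (rule M_graph_attained)
  then have "h \<le> 2 * M_graph (G4 n - F) k n"
    by (rule removed_links_lower_bound[OF assms(1,2,4,5)])
  then show "\<lceil>real h / 2\<rceil> \<le> int (M_graph (G4 n - F) k n)" by linarith
  have "finite F" using assms(4) finite_skip2_links by (rule finite_subset)
  then have "length ?rows \<le> 2 * M_C k N + h + 2"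
    using card_bypass_vertices[of F n] assms(5) by (simp add: length_sensing_rows)
  then show "M_graph (G4 n - F) k n \<le> 2 * M_C k (nat \<lceil>real n / 2\<rceil>) + h + 2"
    using M_graph_le[OF upper] unfolding N_def by linarith
qed

end
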